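(* Let $\Sigma$ be a real symmetric positive definite $n\times n$ matrix, let \[\mathcal S(\Sigma)=\{(\hat\Sigma,\tilde\Sigma)\mid \Sigma=\hat\Sigma+\tilde\Sigma,\ \hat\Sigma\ge0,\ \tilde\Sigma\ge 0,\ \tilde\Sigma\text{ diagonal}\},\] let $(\hat\Sigma_{\rm opt},\tilde\Sigma_{\rm opt})$ be the (unique) maximizer over $\mathcal S(\Sigma)$ of $\operatorname{trace}(\hat\Sigma-\hat\Sigma\Sigma^{-1}\hat\Sigma)$, and let $R_{\rm opt}=\hat\Sigma_{\rm opt}-\hat\Sigma_{\rm opt}\Sigma^{-1}\hat\Sigma_{\rm opt}$. Then for every $(\hat\Sigma,\tilde\Sigma)\in\mathcal S(\Sigma)$, \[\operatorname{trace}\big((\hat\Sigma-\hat\Sigma_{\rm opt})\Sigma^{-1}(\hat\Sigma-\hat\Sigma_{\rm opt})'\big)\le\operatorname{trace}(R_{\rm opt}).\]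
   Context: All matrices are real symmetric $n\times n$; $M\ge0$ means positive semidefinite. The maximizer $\hat\Sigma_{\rm opt}$ is also the maximizer of $\min_K L(K,\hat\Sigma,\tilde\Sigma)$ with $L(K,\hat\Sigma,\tilde\Sigma)=\operatorname{trace}(\hat\Sigma-K\hat\Sigma-\hat\Sigma K'+K(\hat\Sigma+\tilde\Sigma)K')$. *)

theory Defs
  imports "HOL-Analysis.Analysis"
begin

definition symmetric_mat :: "real^'n^'n \<Rightarrow> bool" where
  "symmetric_mat A \<longleftrightarrow> transpose A = A"

definition psd :: "real^'n^'n \<Rightarrow> bool" where
  "psd A \<longleftrightarrow> symmetric_mat A \<and> (\<forall>x. 0 \<le> x \<bullet> (A *v x))"

definition pd :: "real^'n^'n \<Rightarrow> bool" where
  "pd A \<longleftrightarrow> symmetric_mat A \<and> (\<forall>x. x \<noteq> 0 \<longrightarrow> 0 < x \<bullet> (A *v x))"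

definition diagonal_mat :: "real^'n^'n \<Rightarrow> bool" where
  "diagonal_mat A \<longleftrightarrow> (\<forall>i j. i \<noteq> j \<longrightarrow> A $ i $ j = 0)"

definition decomps :: "real^'n^'n \<Rightarrow> ((real^'n^'n) \<times> (real^'n^'n)) set" where
  "decomps S = {(Sh, St). S = Sh + St \<and> psd Sh \<and> psd St \<and> diagonal_mat St}"

definition objective :: "real^'n^'n \<Rightarrow> real^'n^'n \<Rightarrow> real" where
  "objective S Sh = trace (Sh - Sh ** matrix_inv S ** Sh)"

end

theory Submission
  imports Defs
begin

text \<open>
  Write \<open>P = \<Sigma>\<^sup>-\<^sup>1\<close> and \<open>f(A) = tr(A - A P A)\<close>. Along the segment from the maximiser
  \<open>Q\<close> to another admissible \<open>A\<close>, with \<open>D = A - Q\<close>, the objective is the concave quadratic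
  \<open>f(Q + tD) = f(Q) + t g - t\<^sup>2 tr(D P D)\<close>, where \<open>g = tr D - 2 tr(D P Q)\<close>. The admissible
  set is convex, so maximality of \<open>Q\<close> forces \<open>g \<le> 0\<close>, and at \<open>t = 1\<close> this gives
  \<open>tr(D P D) = f(Q) - f(A) + g \<le> f(Q) - f(A)\<close>. Finally \<open>f(A) \<ge> 0\<close> for every admissible
  \<open>A\<close>, because with \<open>B = \<Sigma> - A\<close> one has \<open>A - A P A = A P B\<close>, and \<open>A P B\<close> splits into the
  two congruences \<open>(P A)' B (P A)\<close> and \<open>(P B)' A (P B)\<close> of positive semidefinite matrices.
\<close>

lemma matrix_sub_ldistrib: "(A::'a::ring_1^'n^'m) ** (B - C) = A ** B - A ** C"
  by (vector matrix_matrix_mult_def sum_subtractf[symmetric] algebra_simps)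

lemma matrix_add_rdistrib: "((A::'a::semiring_1^'n^'m) + B) ** C = A ** C + B ** C"
  by (vector matrix_matrix_mult_def sum.distrib[symmetric] algebra_simps)

lemma transpose_add: "transpose ((A::'a::plus^'n^'m) + B) = transpose A + transpose B"
  by (simp add: transpose_def vec_eq_iff)

lemma transpose_diff: "transpose ((A::'a::minus^'n^'m) - B) = transpose A - transpose B"
  by (simp add: transpose_def vec_eq_iff)

lemma trace_transpose: "trace (transpose (A::'a::semiring_1^'n^'n)) = trace A"
  by (simp add: trace_def transpose_def)

lemma trace_scaleR: "trace (c *\<^sub>R (A::real^'n^'n)) = c * trace A"
  by (simp add: trace_def sum_distrib_left)

lemma trace_symmetric_triple_swap:
  fixes A B P :: "real^'n^'n"
  assumes "transpose A = A" "transpose B = B" "transpose P = P"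
  shows "trace (A ** P ** B) = trace (B ** P ** A)"
  by (metis assms matrix_mul_assoc matrix_transpose_mul trace_transpose)

lemma psd_symmetric: "psd A \<Longrightarrow> transpose A = A"
  by (simp add: psd_def symmetric_mat_def)

lemma diag_congruence:
  fixes M :: "real^'n^'m" and B :: "real^'m^'m"
  shows "(transpose M ** B ** M) $ i $ i = column i M \<bullet> (B *v column i M)"
  by (simp add: matrix_matrix_mult_def transpose_def column_def inner_vec_def matrix_vector_mult_def
      sum_distrib_left sum_distrib_right mult_ac) (subst sum.swap, simp add: mult_ac)

lemma trace_congruence_nonneg:
  fixes M :: "real^'n^'m" and B :: "real^'m^'m"
  assumes "psd B"
  shows "0 \<le> trace (transpose M ** B ** M)"
  unfolding trace_def diag_congruence using assms by (simp add: psd_def sum_nonneg)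

lemma psd_segment:
  assumes "psd A" "psd B" "0 \<le> t" "t \<le> 1"
  shows "psd (A + t *\<^sub>R (B - A))"
proof -
  have "x \<bullet> ((A + t *\<^sub>R (B - A)) *v x) = (1 - t) * (x \<bullet> (A *v x)) + t * (x \<bullet> (B *v x))" for x
    by (simp add: algebra_simps scaleR_matrix_vector_assoc[symmetric] inner_diff_right)
  moreover have "0 \<le> x \<bullet> (A *v x)" "0 \<le> x \<bullet> (B *v x)" for x
    using assms by (auto simp: psd_def)
  ultimately show ?thesis
    using assms by (simp add: psd_def symmetric_mat_def transpose_add transpose_diff transpose_scalar)
qed

lemma decomps_segment:
  assumes "(A, B) \<in> decomps S" "(A', B') \<in> decomps S" "0 \<le> t" "t \<le> 1"
  shows "(A + t *\<^sub>R (A' - A), B + t *\<^sub>R (B' - B)) \<in> decomps S"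
proof -
  have "A + t *\<^sub>R (A' - A) + (B + t *\<^sub>R (B' - B)) = (A + B) + t *\<^sub>R ((A' + B') - (A + B))"
    by (simp add: algebra_simps)
  with assms show ?thesis
    by (auto simp: decomps_def diagonal_mat_def psd_segment)
qed

lemma invertible_matrix_inv:
  assumes "invertible (S::'a::semiring_1^'n^'n)"
  shows "S ** matrix_inv S = mat 1" "matrix_inv S ** S = mat 1"
  using someI_ex[OF assms[unfolded invertible_def]] by (simp_all add: matrix_inv_def)

lemma pd_invertible: "pd S \<Longrightarrow> invertible S"
  unfolding pd_def
  by (metis inner_zero_right invertible_left_inverse less_irrefl matrix_left_invertible_ker)

lemma transpose_matrix_inv_symmetric:
  assumes "invertible S" "transpose S = S"
  shows "transpose (matrix_inv S) = matrix_inv (S::real^'n^'n)"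
proof -
  have "S ** transpose (matrix_inv S) = mat 1"
    by (metis assms invertible_matrix_inv(2) matrix_transpose_mul transpose_mat)
  then have "matrix_inv S ** S ** transpose (matrix_inv S) = matrix_inv S"
    by (simp add: matrix_mul_assoc[symmetric])
  then show ?thesis
    by (simp add: invertible_matrix_inv(2)[OF assms(1)])
qed

lemma objective_nonneg:
  fixes A B P :: "real^'n^'n"
  assumes "psd A" "psd B" "transpose P = P" "P ** (A + B) = mat 1"
  shows "0 \<le> trace (A - A ** P ** A)"
proof -
  have sym: "transpose A = A" "transpose B = B"
    using assms(1,2) by (simp_all add: psd_symmetric)
  have APB: "A ** P ** B = A - A ** P ** A"
    by (metis add_diff_cancel_left' assms(4) matrix_mul_assoc matrix_mul_rid matrix_sub_ldistrib)
  have "transpose (A ** P ** B) = B ** P ** A"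
    by (simp add: matrix_transpose_mul sym assms(3) matrix_mul_assoc)
  moreover have "transpose (A - A ** P ** A) = A - A ** P ** A"
    by (simp add: transpose_diff matrix_transpose_mul sym assms(3) matrix_mul_assoc)
  ultimately have BPA: "B ** P ** A = A ** P ** B"
    using APB by simp
  \<comment> \<open>insert \<open>P (A + B) = 1\<close> between \<open>A P\<close> and \<open>B\<close>\<close>
  have "A ** P ** B = A ** P ** B ** P ** A + B ** P ** A ** P ** B"
    by (metis BPA assms(4) matrix_add_ldistrib matrix_add_rdistrib matrix_mul_assoc matrix_mul_rid)
  also have "\<dots> = transpose (P ** A) ** B ** (P ** A) + transpose (P ** B) ** A ** (P ** B)"
    by (simp add: BPA matrix_transpose_mul sym assms(3) matrix_mul_assoc)
  finally have "trace (A - A ** P ** A)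
      = trace (transpose (P ** A) ** B ** (P ** A)) + trace (transpose (P ** B) ** A ** (P ** B))"
    by (simp add: APB trace_add)
  then show ?thesis
    using trace_congruence_nonneg assms(1,2) by (metis add_nonneg_nonneg)
qed

lemma trace_quadratic_along_line:
  fixes Q D P :: "real^'n^'n"
  assumes "transpose Q = Q" "transpose D = D" "transpose P = P"
  shows "trace ((Q + t *\<^sub>R D) - (Q + t *\<^sub>R D) ** P ** (Q + t *\<^sub>R D))
    = trace (Q - Q ** P ** Q) + t * (trace D - 2 * trace (D ** P ** Q)) - t\<^sup>2 * trace (D ** P ** D)"
proof -
  have "(Q + t *\<^sub>R D) ** P ** (Q + t *\<^sub>R D)
      = Q ** P ** Q + t *\<^sub>R (Q ** P ** D) + t *\<^sub>R (D ** P ** Q) + t\<^sup>2 *\<^sub>R (D ** P ** D)"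
    by (simp add: matrix_add_ldistrib matrix_add_rdistrib scalar_matrix_assoc[symmetric]
        matrix_scalar_ac algebra_simps power2_eq_square)
  moreover have "trace (Q ** P ** D) = trace (D ** P ** Q)"
    using assms by (rule trace_symmetric_triple_swap)
  ultimately show ?thesis
    by (simp add: trace_add trace_sub trace_scaleR algebra_simps)
qed

lemma nonpos_if_le_small_multiples:
  fixes g c :: real
  assumes "\<And>t. 0 < t \<Longrightarrow> t \<le> 1 \<Longrightarrow> g \<le> t * c"
  shows "g \<le> 0"
proof (rule ccontr)
  assume "\<not> g \<le> 0"
  define t where "t = min 1 (g / (2 * \<bar>c\<bar> + 1))"
  have "0 < t" "t \<le> 1"
    using \<open>\<not> g \<le> 0\<close> by (auto simp: t_def)
  moreover have "t * c < g"
  proof -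
    have "t * c \<le> t * \<bar>c\<bar>"
      using \<open>0 < t\<close> by (simp add: mult_left_mono)
    also have "\<dots> \<le> g / (2 * \<bar>c\<bar> + 1) * \<bar>c\<bar>"
      by (intro mult_right_mono) (auto simp: t_def)
    also have "\<dots> < g"
      using \<open>\<not> g \<le> 0\<close> by (simp add: field_simps add_pos_nonneg)
    finally show ?thesis .
  qed
  ultimately show False
    using assms by force
qed

lemma pd_matrix_inv:
  assumes "pd S"
  shows "transpose (matrix_inv S) = matrix_inv S" "matrix_inv S ** S = mat 1"
  using assms pd_invertible transpose_matrix_inv_symmetric invertible_matrix_inv(2)
  by (auto simp: pd_def symmetric_mat_def)

lemma objective_along_line:
  assumes "pd S" "transpose Q = Q" "transpose D = D"
  shows "objective S (Q + t *\<^sub>R D) = objective S Q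
    + t * (trace D - 2 * trace (D ** matrix_inv S ** Q)) - t\<^sup>2 * trace (D ** matrix_inv S ** D)"
  unfolding objective_def using assms pd_matrix_inv(1) by (intro trace_quadratic_along_line)

lemma objective_maximiser_first_order:
  assumes "pd S" and opt: "(Q, Q') \<in> decomps S" "\<forall>(A, B) \<in> decomps S. objective S A \<le> objective S Q"
    and "(A, B) \<in> decomps S"
  shows "trace (A - Q) - 2 * trace ((A - Q) ** matrix_inv S ** Q) \<le> 0"
proof (rule nonpos_if_le_small_multiples)
  fix t :: real
  assume t: "0 < t" "t \<le> 1"
  have sym: "transpose Q = Q" "transpose (A - Q) = A - Q"
    using opt(1) assms(4) by (auto simp: decomps_def psd_symmetric transpose_diff)
  have "(Q + t *\<^sub>R (A - Q), Q' + t *\<^sub>R (B - Q')) \<in> decomps S"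
    using opt(1) assms(4) t by (simp add: decomps_segment)
  then have "objective S (Q + t *\<^sub>R (A - Q)) \<le> objective S Q"
    using opt(2) by blast
  then have "t * (trace (A - Q) - 2 * trace ((A - Q) ** matrix_inv S ** Q))
      \<le> t * (t * trace ((A - Q) ** matrix_inv S ** (A - Q)))"
    unfolding objective_along_line[OF assms(1) sym] by (simp add: power2_eq_square)
  then show "trace (A - Q) - 2 * trace ((A - Q) ** matrix_inv S ** Q)
      \<le> t * trace ((A - Q) ** matrix_inv S ** (A - Q))"
    using t(1) by (simp add: mult_le_cancel_left_pos)
qed

theorem proposition13:
  fixes S Sh_opt St_opt :: "real^'n^'n"
  assumes "pd S"
    and "(Sh_opt, St_opt) \<in> decomps S"
    and "\<forall>(Sh, St) \<in> decomps S. objective S Sh \<le> objective S Sh_opt"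
  shows "\<forall>(Sh, St) \<in> decomps S.
           trace ((Sh - Sh_opt) ** matrix_inv S ** transpose (Sh - Sh_opt))
             \<le> trace (Sh_opt - Sh_opt ** matrix_inv S ** Sh_opt)"
proof (intro ballI, clarify)
  fix Sh St
  assume dec: "(Sh, St) \<in> decomps S"
  define D where "D = Sh - Sh_opt"
  have sym: "transpose Sh_opt = Sh_opt" "transpose D = D"
    using assms(2) dec by (auto simp: decomps_def D_def psd_symmetric transpose_diff)
  have "objective S Sh = objective S Sh_opt
      + (trace D - 2 * trace (D ** matrix_inv S ** Sh_opt)) - trace (D ** matrix_inv S ** D)"
    using objective_along_line[OF assms(1) sym, of 1] by (simp add: D_def)
  moreover have "trace D - 2 * trace (D ** matrix_inv S ** Sh_opt) \<le> 0"
    unfolding D_def using objective_maximiser_first_order[OF assms dec] .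
  moreover have "0 \<le> objective S Sh"
    using dec pd_matrix_inv[OF assms(1)]
    by (auto simp: decomps_def objective_def intro: objective_nonneg)
  ultimately show "trace ((Sh - Sh_opt) ** matrix_inv S ** transpose (Sh - Sh_opt))
      \<le> trace (Sh_opt - Sh_opt ** matrix_inv S ** Sh_opt)"
    by (simp add: sym(2) D_def[symmetric] objective_def)
qed

end
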